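(* Let $P$ be a Delzant polyhedron, $v$ a weight with $(v,w)\in\mathcal W(P)$, and let $\mathbf H=(H_{ij})$ satisfy the conditions defining $\mathcal H^\varepsilon_{\alpha,T}$. Then there is $C>0$ such that for all $i,j$, $$\sup_P\Big(v^{\varepsilon-1}\sum_k|(vH_{ij})_k|\Big)<C,$$ and in particular for every $j$, $\sup_P\big(v^{\varepsilon-1}\sum_i|(vH_{ij})_i|\big)<C$.
   Context: $\mathfrak t^*\cong\mathbb R^n$; $P$ a Delzant polyhedron (possibly unbounded); $P_\delta$ the inner parallel polyhedron at distance $\delta$; $\mathbf H=(H_{ij})$ a positive-definite matrix-valued function on $P$ (e.g. $(\mathrm{Hess}\,u)^{-1}$ for the symplectic potential $u$ of an AK metric); subscripts denote $x$-derivatives. $\mathcal W(P)$: $v>0$ smooth on $\overline P$, $|v|\le C_1e^{-C_2|x|}$, $\sum_{|a|\le k}|v^{-1}\partial^av|\le C(k)$; and $\sum_{|a|\le k}\sup|v^{-\beta^*}\partial^aw|\le C_3(k)$ for some $\beta^*>0$. Conditions of $\mathcal H^\varepsilon_{\alpha,T}$ ($\varepsilon\in[0,\min\{\beta^*,\frac12\})$): (1) $\sup_Pv^\varepsilon\|\mathbf H\|^2<\infty$; (2) $\sup_Pv^\varepsilon\sum_{i,j,k}|\partial_kH_{ij}|^2<\infty$; (3) $|\partial_k\partial_lH_{ij}|^2<C$ on $\overline P\setminus P_{\bar\delta}$ for some $\bar\delta>0$; (4) $\sup|v^\varepsilon u|<\infty$ on $\overline P$ and $\sum_{|a|\le2}\sup_{P_\delta}|v^\varepsilon\partial^au|<\infty$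 for small $\delta$, where $\mathbf H=(\mathrm{Hess}\,u)^{-1}$. *)

theory Defs
  imports "HOL-Analysis.Analysis"
begin

text \<open>Points of t* = R^n are vectors of type real^'n.
  Partial derivative of a real function in the k-th coordinate direction.\<close>
definition pd :: "'n::finite \<Rightarrow> (real^'n \<Rightarrow> real) \<Rightarrow> real^'n \<Rightarrow> real" where
  "pd k f x = deriv (\<lambda>t. f (x + t *\<^sub>R axis k 1)) 0"

text \<open>Iterated partial derivative along a list of coordinate directions
  (a multi-index; lists of length at most k cover all derivatives of order at most k).\<close>
fun pds :: "'n::finite list \<Rightarrow> (real^'n \<Rightarrow> real) \<Rightarrow> real^'n \<Rightarrow> real" where
  "pds [] f = f"
| "pds (i # is) f = pd i (pds is f)"

definition smooth_on :: "(real^'n::finite) set \<Rightarrow> (real^'n \<Rightarrow> real) \<Rightarrow> bool" where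
  "smooth_on U f \<longleftrightarrow> (\<forall>is. \<forall>x\<in>U. pds is f differentiable (at x))"

definition hess :: "(real^'n::finite \<Rightarrow> real) \<Rightarrow> real^'n \<Rightarrow> real^'n^'n" where
  "hess f x = (\<chi> i j. pds [i, j] f x)"

text \<open>Delzant polyhedron (possibly unbounded), as a closed set:
  P = {x. l_a(x) = <u_a,x> - lambda_a \<ge> 0, a < d}, with nonempty interior,
  integral normals u_a, each inequality defining a facet (irredundancy), and
  smoothness: at every point of P the normals of the active facets are part of
  a Z-basis of Z^n.\<close>
definition delzant_polyhedron :: "(real^'n::finite) set \<Rightarrow> bool" where
  "delzant_polyhedron P \<longleftrightarrow>
    (\<exists>(d::nat) (u::nat \<Rightarrow> real^'n) (lam::nat \<Rightarrow> real).
       P = {x. \<forall>a<d. lam a \<le> u a \<bullet> x} \<and>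
       interior P \<noteq> {} \<and>
       (\<forall>a<d. \<forall>i. u a $ i \<in> \<int>) \<and>
       (\<forall>a<d. \<exists>x\<in>P. u a \<bullet> x = lam a \<and> (\<forall>b<d. b \<noteq> a \<longrightarrow> lam b < u b \<bullet> x)) \<and>
       (\<forall>x\<in>P. \<exists>e::'n \<Rightarrow> real^'n.
          (\<forall>i j. e i $ j \<in> \<int>) \<and> \<bar>det (\<chi> i. e i)\<bar> = 1 \<and>
          {u a | a. a < d \<and> u a \<bullet> x = lam a} \<subseteq> range e))"

definition inner_parallel :: "(real^'n::finite) set \<Rightarrow> real \<Rightarrow> (real^'n) set" where
  "inner_parallel P \<delta> = {x. cball x \<delta> \<subseteq> P}"

end

theory Submission
  imports Defs
begin

text \<open>By the product rule, \<open>(v H\<^sub>i\<^sub>j)\<^sub>k = v\<^sub>k H\<^sub>i\<^sub>j + v (H\<^sub>i\<^sub>j)\<^sub>k\<close>, and the weight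
  condition gives \<open>|v\<^sub>k| \<le> L v\<close>. Hence \<open>v\<^bsup>\<epsilon>-1\<^esup> |(v H\<^sub>i\<^sub>j)\<^sub>k|\<close> is at most
  \<open>|L| v\<^sup>\<epsilon> |H\<^sub>i\<^sub>j| + v\<^sup>\<epsilon> |(H\<^sub>i\<^sub>j)\<^sub>k|\<close>. Each of these terms is bounded via
  \<open>v\<^sup>\<epsilon> |y| \<le> 1 + v\<^sup>\<epsilon> (v\<^sup>\<epsilon> y\<^sup>2)\<close>: the factor \<open>v\<^sup>\<epsilon>\<close> is bounded because \<open>v\<close>
  decays, and \<open>v\<^sup>\<epsilon> y\<^sup>2\<close> is bounded by conditions (1) and (2).
  Only the decay and logarithmic derivative bounds of \<open>v\<close>, the smoothness of \<open>v\<close> and \<open>H\<close>,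
  and conditions (1), (2) are needed.\<close>

lemma pd_eq_derivative_axis:
  assumes "(f has_derivative f') (at x)"
  shows "pd k f x = f' (axis k 1)"
proof -
  have line: "((\<lambda>t. x + t *\<^sub>R axis k 1) has_derivative (\<lambda>t. t *\<^sub>R axis k 1)) (at 0)"
    by (auto intro!: derivative_eq_intros)
  have "((\<lambda>t. f (x + t *\<^sub>R axis k 1)) has_derivative (\<lambda>t. f' (t *\<^sub>R axis k 1))) (at 0)"
    using has_derivative_compose[OF line] assms by (simp add: o_def)
  moreover have "(\<lambda>t. f' (t *\<^sub>R axis k 1)) = (\<lambda>t. f' (axis k 1) * t)"
    using linear_scale[OF has_derivative_linear[OF assms]] by (auto simp: mult.commute)
  ultimately have "((\<lambda>t. f (x + t *\<^sub>R axis k 1)) has_real_derivative f' (axis k 1)) (at 0)"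
    by (simp add: has_field_derivative_def)
  then show ?thesis
    unfolding pd_def by (rule DERIV_imp_deriv)
qed

lemma pd_mult:
  fixes f g :: "real^'n::finite \<Rightarrow> real"
  assumes "f differentiable (at x)" "g differentiable (at x)"
  shows "pd k (\<lambda>y. f y * g y) x = pd k f x * g x + f x * pd k g x"
proof -
  obtain f' g' where f': "(f has_derivative f') (at x)" and g': "(g has_derivative g') (at x)"
    using assms by (auto simp: differentiable_def)
  have "((\<lambda>y. f y * g y) has_derivative (\<lambda>h. f x * g' h + f' h * g x)) (at x)"
    using has_derivative_mult[OF f' g'] .
  then show ?thesis
    using pd_eq_derivative_axis[OF f'] pd_eq_derivative_axis[OF g']
    by (simp add: pd_eq_derivative_axis algebra_simps)
qed

lemma abs_pd_le_of_log_derivative_bound: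
  fixes f :: "real^'n::finite \<Rightarrow> real"
  assumes bound: "(\<Sum>is\<in>{is::'n list. length is \<le> 1}. \<bar>pds is f x / f x\<bar>) \<le> L"
    and pos: "0 < f x"
  shows "\<bar>pd k f x\<bar> \<le> L * f x"
proof -
  have "finite {is::'n list. length is \<le> 1}"
    using finite_lists_length_le[of "UNIV::'n set" 1] by simp
  then have "\<bar>pds [k] f x / f x\<bar> \<le> (\<Sum>is\<in>{is::'n list. length is \<le> 1}. \<bar>pds is f x / f x\<bar>)"
    by (intro member_le_sum) auto
  with bound have "\<bar>pds [k] f x / f x\<bar> \<le> L"
    by linarith
  with pos show ?thesis
    by (simp add: divide_le_eq)
qed

lemma smooth_on_imp_differentiable:
  assumes "smooth_on U f" "x \<in> U"
  shows "f differentiable (at x)"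
  using assms unfolding smooth_on_def by (metis pds.simps(1))

lemma power2_matrix_entry_le_norm:
  fixes A :: "real^'n::finite^'m::finite"
  shows "(A $ i $ j)\<^sup>2 \<le> (norm A)\<^sup>2"
proof -
  have "\<bar>A $ i $ j\<bar> \<le> norm A"
    using component_le_norm_cart[of "A $ i" j] Finite_Cartesian_Product.norm_nth_le[of A i]
    by linarith
  then show ?thesis
    by (metis abs_ge_zero power2_abs power_mono)
qed

lemma le_triple_sum:
  fixes f :: "'i::finite \<Rightarrow> 'j::finite \<Rightarrow> 'k::finite \<Rightarrow> real"
  assumes "\<And>i j k. 0 \<le> f i j k"
  shows "f i j k \<le> (\<Sum>i\<in>UNIV. \<Sum>j\<in>UNIV. \<Sum>k\<in>UNIV. f i j k)"
proof -
  have "f i j k \<le> (\<Sum>k\<in>UNIV. f i j k)"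
    by (rule member_le_sum) (auto simp: assms)
  also have "\<dots> \<le> (\<Sum>j\<in>UNIV. \<Sum>k\<in>UNIV. f i j k)"
    by (rule member_le_sum[where f = "\<lambda>j. \<Sum>k\<in>UNIV. f i j k"]) (auto intro!: sum_nonneg assms)
  also have "\<dots> \<le> (\<Sum>i\<in>UNIV. \<Sum>j\<in>UNIV. \<Sum>k\<in>UNIV. f i j k)"
    by (rule member_le_sum[where f = "\<lambda>i. \<Sum>j\<in>UNIV. \<Sum>k\<in>UNIV. f i j k"])
       (auto intro!: sum_nonneg assms)
  finally show ?thesis .
qed

lemma mult_abs_le_of_mult_square_le:
  fixes a y :: real
  assumes "0 \<le> a" "a \<le> A" "a * y\<^sup>2 \<le> K"
  shows "a * \<bar>y\<bar> \<le> 1 + A * K"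
proof -
  have "z \<le> 1 + z\<^sup>2" for z :: real
    using zero_le_power2[of "z - 1/2"] by (simp add: power2_diff power_divide)
  then have "a * \<bar>y\<bar> \<le> 1 + a * (a * y\<^sup>2)"
    by (metis abs_mult power2_abs power2_eq_square mult.assoc mult.left_commute)
  also have "a * (a * y\<^sup>2) \<le> A * K"
    using assms by (intro mult_mono) auto
  finally show ?thesis by simp
qed

lemma powr_abs_pd_mult_le:
  fixes f g :: "real^'n::finite \<Rightarrow> real"
  assumes "f differentiable (at x)" "g differentiable (at x)"
    and pos: "0 < f x" and log_bound: "\<bar>pd k f x\<bar> \<le> L * f x"
  shows "f x powr (e - 1) * \<bar>pd k (\<lambda>y. f y * g y) x\<bar>
           \<le> \<bar>L\<bar> * (f x powr e * \<bar>g x\<bar>) + f x powr e * \<bar>pd k g x\<bar>"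
proof -
  have "\<bar>pd k (\<lambda>y. f y * g y) x\<bar> \<le> \<bar>pd k f x\<bar> * \<bar>g x\<bar> + f x * \<bar>pd k g x\<bar>"
    using pd_mult[OF assms(1,2)] pos by (simp add: abs_mult abs_triangle_ineq[THEN order_trans])
  also have "\<dots> \<le> \<bar>L\<bar> * f x * \<bar>g x\<bar> + f x * \<bar>pd k g x\<bar>"
    using log_bound pos by (intro add_right_mono mult_right_mono) (auto intro: order_trans)
  finally have "f x powr (e - 1) * \<bar>pd k (\<lambda>y. f y * g y) x\<bar>
      \<le> f x powr (e - 1) * (\<bar>L\<bar> * f x * \<bar>g x\<bar> + f x * \<bar>pd k g x\<bar>)"
    by (simp add: mult_left_mono)
  also have "\<dots> = \<bar>L\<bar> * (f x powr e * \<bar>g x\<bar>) + f x powr e * \<bar>pd k g x\<bar>"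
    using pos by (simp add: powr_diff field_simps)
  finally show ?thesis .
qed

lemma powr_abs_pd_mult_bounded:
  fixes f g :: "real^'n::finite \<Rightarrow> real"
  assumes "f differentiable (at x)" "g differentiable (at x)"
    and pos: "0 < f x" and "f x \<le> M" "0 \<le> e"
    and log_bound: "\<bar>pd k f x\<bar> \<le> L * f x"
    and "f x powr e * (g x)\<^sup>2 \<le> K1" "f x powr e * (pd k g x)\<^sup>2 \<le> K2"
  shows "f x powr (e - 1) * \<bar>pd k (\<lambda>y. f y * g y) x\<bar>
           \<le> \<bar>L\<bar> * (1 + M powr e * K1) + (1 + M powr e * K2)"
proof -
  have weight: "0 \<le> f x powr e" "f x powr e \<le> M powr e"
    using assms(3-5) by (auto intro: powr_mono2)
  have "\<bar>L\<bar> * (f x powr e * \<bar>g x\<bar>) \<le> \<bar>L\<bar> * (1 + M powr e * K1)"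
    using mult_abs_le_of_mult_square_le[OF weight assms(7)] by (simp add: mult_left_mono)
  moreover have "f x powr e * \<bar>pd k g x\<bar> \<le> 1 + M powr e * K2"
    using mult_abs_le_of_mult_square_le[OF weight assms(8)] .
  ultimately show ?thesis
    using powr_abs_pd_mult_le[OF assms(1,2) pos log_bound, of e] by linarith
qed

lemma le_of_abs_le_exp_decay:
  fixes v :: "'a::real_normed_vector \<Rightarrow> real"
  assumes "\<bar>v x\<bar> \<le> C1 * exp (- C2 * norm x)" "0 \<le> C1" "0 \<le> C2"
  shows "v x \<le> C1"
proof -
  have "v x \<le> C1 * exp (- C2 * norm x)"
    using assms(1) by linarith
  also have "\<dots> \<le> C1"
    using assms(2,3) by (simp add: mult_left_le)
  finally show ?thesis .
qed

lemma mult_sum_less_card_mult_abs: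
  fixes f :: "'k::finite \<Rightarrow> real"
  assumes "\<And>k. c * f k \<le> B"
  shows "c * (\<Sum>k\<in>UNIV. f k) < real CARD('k) * \<bar>B\<bar> + 1"
proof -
  have "c * (\<Sum>k\<in>UNIV. f k) \<le> real CARD('k) * B"
    unfolding sum_distrib_left by (rule sum_bounded_above[of UNIV, simplified]) (rule assms)
  also have "\<dots> \<le> real CARD('k) * \<bar>B\<bar>"
    by (simp add: mult_left_mono)
  finally show ?thesis
    by linarith
qed

theorem lemma3p5:
  fixes P :: "(real^'n::finite) set"
    and v w u :: "real^'n \<Rightarrow> real"
    and H :: "real^'n \<Rightarrow> real^'n^'n"
    and \<epsilon> \<beta> :: real
  assumes delzant: "delzant_polyhedron P"
    \<comment> \<open>(v,w) in W(P)\<close>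
    and v_pos: "\<forall>x\<in>P. 0 < v x"
    and v_smooth: "\<exists>U. open U \<and> P \<subseteq> U \<and> smooth_on U v"
    and v_decay: "\<exists>C1 C2. 0 < C1 \<and> 0 < C2 \<and> (\<forall>x\<in>P. \<bar>v x\<bar> \<le> C1 * exp (- C2 * norm x))"
    and v_log: "\<forall>k. \<exists>C. \<forall>x\<in>P. (\<Sum>is\<in>{is::'n list. length is \<le> k}. \<bar>pds is v x / v x\<bar>) \<le> C"
    and w_smooth: "\<exists>U. open U \<and> P \<subseteq> U \<and> smooth_on U w"
    and beta_pos: "0 < \<beta>"
    and w_bd: "\<forall>k. \<exists>C. \<forall>is::'n list. length is \<le> k \<longrightarrow>
                 (\<forall>x\<in>P. \<bar>v x powr (- \<beta>) * pds is w x\<bar> \<le> C)"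
    \<comment> \<open>range of epsilon\<close>
    and eps_nonneg: "0 \<le> \<epsilon>"
    and eps_less: "\<epsilon> < min \<beta> (1/2)"
    \<comment> \<open>H positive definite, H = (Hess u)^(-1), smooth\<close>
    and H_posdef: "\<forall>x\<in>interior P. transpose (H x) = H x \<and>
                     (\<forall>\<xi>. \<xi> \<noteq> 0 \<longrightarrow> 0 < \<xi> \<bullet> (H x *v \<xi>))"
    and u_smooth: "smooth_on (interior P) u"
    and H_hess: "\<forall>x\<in>interior P. invertible (hess u x) \<and> H x = matrix_inv (hess u x)"
    and H_smooth: "\<forall>i j. smooth_on (interior P) (\<lambda>y. H y $ i $ j)"
    \<comment> \<open>condition (1)\<close>
    and cond1: "\<exists>C. \<forall>x\<in>interior P. v x powr \<epsilon> * (norm (H x))\<^sup>2 \<le> C"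
    \<comment> \<open>condition (2)\<close>
    and cond2: "\<exists>C. \<forall>x\<in>interior P.
                  v x powr \<epsilon> * (\<Sum>i\<in>UNIV. \<Sum>j\<in>UNIV. \<Sum>k\<in>UNIV. (pd k (\<lambda>y. H y $ i $ j) x)\<^sup>2) \<le> C"
    \<comment> \<open>condition (3)\<close>
    and cond3: "\<exists>\<delta>b>0. \<exists>C. \<forall>x\<in>interior P - inner_parallel P \<delta>b. \<forall>i j k l.
                  (pds [k, l] (\<lambda>y. H y $ i $ j) x)\<^sup>2 < C"
    \<comment> \<open>condition (4)\<close>
    and cond4a: "\<exists>C. \<forall>x\<in>P. \<bar>v x powr \<epsilon> * u x\<bar> \<le> C"
    and cond4b: "\<exists>\<delta>0>0. \<forall>\<delta>. 0 < \<delta> \<and> \<delta> < \<delta>0 \<longrightarrow>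
                  (\<exists>C. \<forall>x\<in>inner_parallel P \<delta>.
                     (\<Sum>is\<in>{is::'n list. length is \<le> 2}. \<bar>v x powr \<epsilon> * pds is u x\<bar>) \<le> C)"
  shows "\<exists>C>0.
           (\<forall>i j. \<forall>x\<in>interior P.
              v x powr (\<epsilon> - 1) * (\<Sum>k\<in>UNIV. \<bar>pd k (\<lambda>y. v y * H y $ i $ j) x\<bar>) < C) \<and>
           (\<forall>j. \<forall>x\<in>interior P.
              v x powr (\<epsilon> - 1) * (\<Sum>i\<in>UNIV. \<bar>pd i (\<lambda>y. v y * H y $ i $ j) x\<bar>) < C)"
proof -
  obtain C1 C2 where "0 < C1" "0 < C2" and decay: "\<forall>x\<in>P. \<bar>v x\<bar> \<le> C1 * exp (- C2 * norm x)"
    using v_decay by blast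
  obtain L where L: "\<forall>x\<in>P. (\<Sum>is\<in>{is::'n list. length is \<le> 1}. \<bar>pds is v x / v x\<bar>) \<le> L"
    using v_log by blast
  obtain K1 where K1: "\<forall>x\<in>interior P. v x powr \<epsilon> * (norm (H x))\<^sup>2 \<le> K1"
    using cond1 by blast
  obtain K2 where K2: "\<forall>x\<in>interior P.
      v x powr \<epsilon> * (\<Sum>i\<in>UNIV. \<Sum>j\<in>UNIV. \<Sum>k\<in>UNIV. (pd k (\<lambda>y. H y $ i $ j) x)\<^sup>2) \<le> K2"
    using cond2 by blast
  obtain U where "P \<subseteq> U" "smooth_on U v"
    using v_smooth by blast
  define B where "B = \<bar>L\<bar> * (1 + C1 powr \<epsilon> * K1) + (1 + C1 powr \<epsilon> * K2)"
  have term_le: "v x powr (\<epsilon> - 1) * \<bar>pd k (\<lambda>y. v y * H y $ i $ j) x\<bar> \<le> B"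
    if x: "x \<in> interior P" for x i j k
  proof -
    have xP: "x \<in> P" and pos: "0 < v x"
      using x interior_subset v_pos by blast+
    have v_le: "v x \<le> C1"
      using decay xP \<open>0 < C1\<close> \<open>0 < C2\<close> by (intro le_of_abs_le_exp_decay[of v x C1 C2]) auto
    show ?thesis
      unfolding B_def
    proof (rule powr_abs_pd_mult_bounded[where f = v and g = "\<lambda>y. H y $ i $ j",
          OF _ _ pos v_le eps_nonneg])
      show "v differentiable (at x)" "(\<lambda>y. H y $ i $ j) differentiable (at x)"
        using smooth_on_imp_differentiable \<open>P \<subseteq> U\<close> \<open>smooth_on U v\<close> H_smooth xP x by blast+
      show "\<bar>pd k v x\<bar> \<le> L * v x"
        using abs_pd_le_of_log_derivative_bound L xP pos by blast
      show "v x powr \<epsilon> * (H x $ i $ j)\<^sup>2 \<le> K1"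
        using K1 x power2_matrix_entry_le_norm[of "H x" i j]
        by (meson mult_left_mono order_trans powr_ge_zero)
      show "v x powr \<epsilon> * (pd k (\<lambda>y. H y $ i $ j) x)\<^sup>2 \<le> K2"
        using K2 x le_triple_sum[of "\<lambda>i j k. (pd k (\<lambda>y. H y $ i $ j) x)\<^sup>2" i j k]
        by (meson mult_left_mono order_trans powr_ge_zero zero_le_power2)
    qed
  qed
  show ?thesis
  proof (intro exI conjI allI ballI)
    show "0 < real CARD('n) * \<bar>B\<bar> + 1"
      by (simp add: add_nonneg_pos)
  qed (use term_le in \<open>auto intro!: mult_sum_less_card_mult_abs\<close>)
qed

end
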